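(* Let $w$ be a metric on a set $V$ of $n$ points taking positive integer values such that the graph $G_1$ (pairs at distance $1$) is connected, and let $\ell$ be an integer with $0<\ell<n/2$. Then $$\mathsf{TSP}(w)\ \ge\ n+\frac17\sum_{v\in L_\ell}\mathsf{rc}(S_v).$$
   Context: $G_1$ is the graph on $V$ whose edges are the pairs $(u,v)$ with $w(u,v)=1$. $\mathsf{TSP}(w)$ is the minimum weight of a Hamiltonian cycle on $V$ under $w$. A vertex $v$ is $\ell$-light iff there is an edge $e$ of $G_1$ incident to $v$ that is a bridge of $G_1$ and such that the connected component of $G_1\setminus e$ containing $v$ has at most $\ell$ vertices; since $\ell<n/2$ such an edge (the witness $e_v$) is unique, and $S_v$ denotes the connected component of $G_1\setminus e_v$ containing $v$. A vertex $v$ is maximal $\ell$-light iff it is $\ell$-light and there is no other $\ell$-light vertex $u$ with $v\in V(S_u)$; $L_\ell$ is the set of maximal $\ell$-light vertices. For $v\in L_\ell$ and $u\in V(S_v)$, the out-reach distance is $\mathsf{ord}(u)=\min\{w(u,u'):u'\notin V(S_v)\}$. A reconfiguration of $S_v$ is a multiset $R$ of unordered pairs of vertices of $V(S_v)$ whose induced multigraph on $V(S_v)$ is connected; $V_1(R)$ is the set of vertices of odd degree in this multigraph. Its cost is $\mathsf{cost}(R)=\sum_{(u,u')\in R}w(u,u')+\frac12\sum_{u\in V_1(R)}\mathsf{ord}(u)-(|V(S_v)|-1)$, and $\mathsf{rc}(S_v)$ is the minimum cost of a reconfiguration of $S_v$. *)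

theory Defs
  imports Complex_Main "HOL-Library.Multiset"
begin

definition int_metric :: "'a set \<Rightarrow> ('a \<Rightarrow> 'a \<Rightarrow> nat) \<Rightarrow> bool" where
  "int_metric V w \<longleftrightarrow>
     (\<forall>u\<in>V. w u u = 0) \<and>
     (\<forall>u\<in>V. \<forall>v\<in>V. u \<noteq> v \<longrightarrow> w u v \<ge> 1) \<and>
     (\<forall>u\<in>V. \<forall>v\<in>V. w u v = w v u) \<and>
     (\<forall>u\<in>V. \<forall>v\<in>V. \<forall>x\<in>V. w u x \<le> w u v + w v x)"

definition G1 :: "'a set \<Rightarrow> ('a \<Rightarrow> 'a \<Rightarrow> nat) \<Rightarrow> 'a set set" where
  "G1 V w = {{u, v} | u v. u \<in> V \<and> v \<in> V \<and> u \<noteq> v \<and> w u v = 1}"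

definition adj :: "'a set set \<Rightarrow> ('a \<times> 'a) set" where
  "adj F = {(u, v). {u, v} \<in> F \<and> u \<noteq> v}"

definition gcomp :: "'a set set \<Rightarrow> 'a \<Rightarrow> 'a set" where
  "gcomp F x = {y. (x, y) \<in> (adj F)\<^sup>*}"

definition connected_graph :: "'a set \<Rightarrow> 'a set set \<Rightarrow> bool" where
  "connected_graph V F \<longleftrightarrow> (\<forall>x\<in>V. \<forall>y\<in>V. (x, y) \<in> (adj F)\<^sup>*)"

definition is_bridge :: "'a set set \<Rightarrow> 'a set \<Rightarrow> bool" where
  "is_bridge F e \<longleftrightarrow> e \<in> F \<and> (\<exists>a b. e = {a, b} \<and> a \<noteq> b \<and> b \<notin> gcomp (F - {e}) a)"

definition light_witness :: "'a set \<Rightarrow> ('a \<Rightarrow> 'a \<Rightarrow> nat) \<Rightarrow> nat \<Rightarrow> 'a \<Rightarrow> 'a set \<Rightarrow> bool" where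
  "light_witness V w l v e \<longleftrightarrow>
     v \<in> e \<and> is_bridge (G1 V w) e \<and> card (gcomp (G1 V w - {e}) v) \<le> l"

definition light :: "'a set \<Rightarrow> ('a \<Rightarrow> 'a \<Rightarrow> nat) \<Rightarrow> nat \<Rightarrow> 'a \<Rightarrow> bool" where
  "light V w l v \<longleftrightarrow> v \<in> V \<and> (\<exists>e. light_witness V w l v e)"

text \<open>Vertex set of S_v (the witness e_v is unique when l < n/2).\<close>
definition S :: "'a set \<Rightarrow> ('a \<Rightarrow> 'a \<Rightarrow> nat) \<Rightarrow> nat \<Rightarrow> 'a \<Rightarrow> 'a set" where
  "S V w l v = gcomp (G1 V w - {THE e. light_witness V w l v e}) v"

definition max_light :: "'a set \<Rightarrow> ('a \<Rightarrow> 'a \<Rightarrow> nat) \<Rightarrow> nat \<Rightarrow> 'a \<Rightarrow> bool" where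
  "max_light V w l v \<longleftrightarrow> light V w l v \<and>
     \<not> (\<exists>u. u \<noteq> v \<and> light V w l u \<and> v \<in> S V w l u)"

definition L :: "'a set \<Rightarrow> ('a \<Rightarrow> 'a \<Rightarrow> nat) \<Rightarrow> nat \<Rightarrow> 'a set" where
  "L V w l = {v. max_light V w l v}"

definition ordist :: "'a set \<Rightarrow> ('a \<Rightarrow> 'a \<Rightarrow> nat) \<Rightarrow> nat \<Rightarrow> 'a \<Rightarrow> 'a \<Rightarrow> nat" where
  "ordist V w l v u = Min {w u u' | u'. u' \<in> V - S V w l v}"

text \<open>Reconfigurations: multisets of unordered pairs, each pair represented by an
  ordered pair (u,u'); the induced multigraph is undirected (a loop counts twice in the degree).\<close>
definition mdeg :: "('a \<times> 'a) multiset \<Rightarrow> 'a \<Rightarrow> nat" where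
  "mdeg R u = size (filter_mset (\<lambda>p. fst p = u) R) + size (filter_mset (\<lambda>p. snd p = u) R)"

definition odd_vertices :: "'a set \<Rightarrow> ('a \<times> 'a) multiset \<Rightarrow> 'a set" where
  "odd_vertices X R = {u \<in> X. odd (mdeg R u)}"

definition is_reconf :: "'a set \<Rightarrow> ('a \<times> 'a) multiset \<Rightarrow> bool" where
  "is_reconf X R \<longleftrightarrow>
     (\<forall>p \<in># R. fst p \<in> X \<and> snd p \<in> X) \<and>
     (\<forall>x\<in>X. \<forall>y\<in>X. (x, y) \<in> (set_mset R \<union> (set_mset R)\<inverse>)\<^sup>*)"

definition rcost :: "'a set \<Rightarrow> ('a \<Rightarrow> 'a \<Rightarrow> nat) \<Rightarrow> nat \<Rightarrow> 'a \<Rightarrow> ('a \<times> 'a) multiset \<Rightarrow> real" where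
  "rcost V w l v R =
     real (\<Sum>p\<in>#R. w (fst p) (snd p))
     + (1/2) * real (\<Sum>u\<in>odd_vertices (S V w l v) R. ordist V w l v u)
     - (real (card (S V w l v)) - 1)"

definition rc :: "'a set \<Rightarrow> ('a \<Rightarrow> 'a \<Rightarrow> nat) \<Rightarrow> nat \<Rightarrow> 'a \<Rightarrow> real" where
  "rc V w l v = Inf {rcost V w l v R | R. is_reconf (S V w l v) R}"

definition tour_weight :: "('a \<Rightarrow> 'a \<Rightarrow> nat) \<Rightarrow> 'a list \<Rightarrow> nat" where
  "tour_weight w xs = (\<Sum>i<length xs. w (xs ! i) (xs ! ((i + 1) mod length xs)))"

definition TSP :: "'a set \<Rightarrow> ('a \<Rightarrow> 'a \<Rightarrow> nat) \<Rightarrow> nat" where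
  "TSP V w = Min {tour_weight w xs | xs. distinct xs \<and> set xs = V}"

end

theory Submission
  imports Defs "HOL-Library.Disjoint_Sets"
begin

text \<open>Fix an optimal tour. Its weight is \<open>n\<close> plus the total excess \<open>\<Sum> (w e - 1)\<close> of its
  edges. For \<open>v \<in> L\<^sub>\<ell>\<close>, the tour edges inside \<open>S\<^sub>v\<close> together with a doubled spanning forest of
  unit edges joining their components form a reconfiguration of \<open>S\<^sub>v\<close> of cost at most three
  times the excess of the tour edges touching \<open>S\<^sub>v\<close>: the forest has fewer edges than the tour
  has exits from \<open>S\<^sub>v\<close>, every odd vertex ends a crossing tour edge whose weight bounds its
  out-reach distance, and since the bridge \<open>e\<^sub>v\<close> is the only unit edge leaving \<open>S\<^sub>v\<close>, all
  crossing edges but one have positive excess. The sets \<open>S\<^sub>v\<close>, \<open>v \<in> L\<^sub>\<ell>\<close>, are pairwise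
  disjoint, so each tour edge is counted at most twice, and \<open>\<Sum> rc(S\<^sub>v) \<le> 6 (TSP - n)\<close>.\<close>

section \<open>Connecting a partition by few edges\<close>

definition sym_edges :: "('a \<times> 'a) multiset \<Rightarrow> ('a \<times> 'a) set" where
  "sym_edges R = set_mset R \<union> (set_mset R)\<inverse>"

lemma sym_edges_plus: "sym_edges (R + C) = sym_edges R \<union> sym_edges C"
  by (auto simp: sym_edges_def)

lemma sym_edges_rtrancl_sym: "(x, y) \<in> (sym_edges R)\<^sup>* \<Longrightarrow> (y, x) \<in> (sym_edges R)\<^sup>*"
  unfolding sym_edges_def by (rule symD[OF sym_rtrancl[OF sym_Un_converse]])

lemma rtrancl_exit_edge:
  assumes "(x, y) \<in> G\<^sup>*" "x \<in> Q" "y \<notin> Q"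
  obtains a b where "(x, a) \<in> G\<^sup>*" "(a, b) \<in> G" "a \<in> Q" "b \<notin> Q"
  using assms
proof (induction arbitrary: thesis rule: rtrancl_induct)
  case (step y z)
  then show ?case by (cases "y \<in> Q") blast+
qed simp

lemma partition_on_merge:
  assumes "partition_on X P" "finite P" "Q1 \<in> P" "Q2 \<in> P" "Q1 \<noteq> Q2"
  shows "partition_on X (insert (Q1 \<union> Q2) (P - {Q1, Q2}))"
    and "card (insert (Q1 \<union> Q2) (P - {Q1, Q2})) = card P - 1"
proof -
  have disj: "\<And>A B. A \<in> P \<Longrightarrow> B \<in> P \<Longrightarrow> A \<noteq> B \<Longrightarrow> A \<inter> B = {}"
    using assms(1) unfolding partition_on_def disjoint_def by blast
  have ne: "{} \<notin> P" "\<Union>P = X" using assms(1) unfolding partition_on_def by auto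
  show "partition_on X (insert (Q1 \<union> Q2) (P - {Q1, Q2}))"
    unfolding partition_on_def disjoint_def
    using assms(3-5) ne disj[of Q1] disj[of Q2] disj by auto
  have "Q1 \<union> Q2 \<notin> P - {Q1, Q2}"
  proof
    assume "Q1 \<union> Q2 \<in> P - {Q1, Q2}"
    then have "Q1 \<inter> (Q1 \<union> Q2) = {}" using disj[of Q1 "Q1 \<union> Q2"] assms(3) by auto
    then show False using ne(1) assms(3) by auto
  qed
  moreover have "2 \<le> card P" using card_mono[OF assms(2), of "{Q1, Q2}"] assms(3-5) by simp
  ultimately show "card (insert (Q1 \<union> Q2) (P - {Q1, Q2})) = card P - 1"
    using assms(2-5) by (simp add: card_Diff_subset)
qed

lemma blocks_merged_by_edge:
  assumes "Q1 \<in> P" "Q2 \<in> P" "a \<in> Q1" "b \<in> Q2"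
    and blocks: "\<And>Q x y. Q \<in> P \<Longrightarrow> x \<in> Q \<Longrightarrow> y \<in> Q \<Longrightarrow> (x, y) \<in> (sym_edges R)\<^sup>*"
    and Z: "Z \<in> insert (Q1 \<union> Q2) (P - {Q1, Q2})" "u \<in> Z" "v \<in> Z"
  shows "(u, v) \<in> (sym_edges (R + {#(a, b)#}))\<^sup>*"
proof -
  let ?R = "sym_edges (R + {#(a, b)#})"
  have ab: "(a, b) \<in> ?R\<^sup>*" "(b, a) \<in> ?R\<^sup>*" unfolding sym_edges_def by auto
  have old: "(x, y) \<in> ?R\<^sup>*" if "Q \<in> P" "x \<in> Q" "y \<in> Q" for Q x y
    using blocks[OF that] rtrancl_mono[of "sym_edges R" ?R] unfolding sym_edges_plus by blast
  show ?thesis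
  proof (cases "Z = Q1 \<union> Q2")
    case True
    then consider "u \<in> Q1" "v \<in> Q1" | "u \<in> Q2" "v \<in> Q2" | "u \<in> Q1" "v \<in> Q2" | "u \<in> Q2" "v \<in> Q1"
      using Z by blast
    then show ?thesis
      using old[OF assms(1)] old[OF assms(2)] ab assms(3,4) by cases (meson rtrancl_trans)+
  next
    case False
    then show ?thesis using Z old by blast
  qed
qed

text \<open>Kruskal's argument: an edge of \<open>G\<close> leaving a block merges it with another block.\<close>
lemma connecting_edges_for_partition:
  assumes "finite P" "partition_on X P"
    and "\<And>Q x y. Q \<in> P \<Longrightarrow> x \<in> Q \<Longrightarrow> y \<in> Q \<Longrightarrow> (x, y) \<in> (sym_edges R)\<^sup>*"
    and G: "G \<subseteq> X \<times> X" "\<And>x y. x \<in> X \<Longrightarrow> y \<in> X \<Longrightarrow> (x, y) \<in> G\<^sup>*"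
  shows "\<exists>C. size C \<le> card P - 1 \<and> set_mset C \<subseteq> G \<and>
           (\<forall>x\<in>X. \<forall>y\<in>X. (x, y) \<in> (sym_edges (R + C))\<^sup>*)"
  using assms(1-3)
proof (induction "card P" arbitrary: P R rule: less_induct)
  case less
  have X: "X = \<Union>P" and ne: "{} \<notin> P" using less.prems(2) unfolding partition_on_def by auto
  show ?case
  proof (cases "card P \<le> 1")
    case True
    then have "\<And>Q Q'. Q \<in> P \<Longrightarrow> Q' \<in> P \<Longrightarrow> Q = Q'"
      using card_le_Suc0_iff_eq[OF less.prems(1)] by auto
    then have "\<forall>x\<in>X. \<forall>y\<in>X. (x, y) \<in> (sym_edges (R + {#}))\<^sup>*"
      using less.prems(3) X by simp metis
    then show ?thesis by (intro exI[of _ "{#}"]) simp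
  next
    case False
    then obtain Q1 Q2 where q: "Q1 \<in> P" "Q2 \<in> P" "Q1 \<noteq> Q2"
      by (metis card_le_Suc0_iff_eq less.prems(1) One_nat_def)
    obtain x y where xy: "x \<in> Q1" "y \<in> Q2" using q ne by (metis equals0I)
    have "y \<notin> Q1" using less.prems(2) q xy unfolding partition_on_def disjoint_def by blast
    moreover have "(x, y) \<in> G\<^sup>*" using G(2) X xy q by blast
    ultimately obtain a b where ab: "(a, b) \<in> G" "a \<in> Q1" "b \<notin> Q1"
      using rtrancl_exit_edge xy(1) by metis
    then obtain Q' where Q': "Q' \<in> P" "b \<in> Q'" "Q' \<noteq> Q1" using G(1) X by blast
    define P' where "P' = insert (Q1 \<union> Q') (P - {Q1, Q'})"
    define R' where "R' = R + {#(a, b)#}"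
    have part': "partition_on X P'" and card': "card P' = card P - 1"
      unfolding P'_def using partition_on_merge[OF less.prems(2,1) q(1) Q'(1)] Q'(3)
      by auto
    have blocks': "(u, v) \<in> (sym_edges R')\<^sup>*" if "Z \<in> P'" "u \<in> Z" "v \<in> Z" for Z u v
      unfolding R'_def
    proof (rule blocks_merged_by_edge[OF q(1) Q'(1) ab(2) Q'(2)])
      show "(x, y) \<in> (sym_edges R)\<^sup>*" if "Q \<in> P" "x \<in> Q" "y \<in> Q" for Q x y
        using less.prems(3) that by blast
    qed (use that in \<open>simp_all add: P'_def\<close>)
    have "card P' < card P" using card' False by simp
    moreover have "finite P'" unfolding P'_def using less.prems(1) by simp
    ultimately obtain C' where C': "size C' \<le> card P' - 1" "set_mset C' \<subseteq> G"
      "\<forall>x\<in>X. \<forall>y\<in>X. (x, y) \<in> (sym_edges (R' + C'))\<^sup>*"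
      using less.hyps part' blocks' by blast
    show ?thesis
      using C' ab card' False unfolding R'_def
      by (intro exI[of _ "add_mset (a, b) C'"]) auto
  qed
qed

section \<open>Tours\<close>

locale metric_tour =
  fixes V :: "'a set" and w :: "'a \<Rightarrow> 'a \<Rightarrow> nat" and xs :: "'a list"
  assumes metric: "int_metric V w" and distinct: "distinct xs" and set_xs: "set xs = V"
    and length_ge_3: "3 \<le> length xs"
begin

definition nxt :: "nat \<Rightarrow> nat" where
  "nxt i = Suc i mod length xs"

definition cost :: "nat \<Rightarrow> nat" where
  "cost i = w (xs ! i) (xs ! nxt i)"

definition excess_near :: "'a set \<Rightarrow> nat" where
  "excess_near A = (\<Sum>i<length xs. if xs ! i \<in> A \<or> xs ! nxt i \<in> A then cost i - 1 else 0)"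

lemma length_pos: "0 < length xs"
  using length_ge_3 by linarith

lemma nxt_less: "nxt i < length xs"
  unfolding nxt_def using length_pos by simp

lemma nxt_neq: "i < length xs \<Longrightarrow> nxt i \<noteq> i"
  unfolding nxt_def using length_ge_3 by (cases "Suc i < length xs") (auto simp: mod_if)

lemma nth_in_V: "i < length xs \<Longrightarrow> xs ! i \<in> V"
  using set_xs by auto

lemma nth_eq_iff: "i < length xs \<Longrightarrow> j < length xs \<Longrightarrow> xs ! i = xs ! j \<longleftrightarrow> i = j"
  using nth_eq_iff_index_eq[OF distinct] by blast

lemma obtain_index:
  assumes "x \<in> V"
  obtains i where "i < length xs" "xs ! i = x"
  using assms set_xs by (auto simp: in_set_conv_nth)

lemma nxt_inj: "i < length xs \<Longrightarrow> j < length xs \<Longrightarrow> nxt i = nxt j \<Longrightarrow> i = j"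
  unfolding nxt_def using length_pos
  by (cases "Suc i < length xs"; cases "Suc j < length xs") (auto simp: mod_if)

lemma nxt_surj:
  assumes "p < length xs"
  obtains i where "i < length xs" "nxt i = p"
proof
  show "(p + length xs - 1) mod length xs < length xs" using length_pos by simp
  show "nxt ((p + length xs - 1) mod length xs) = p"
    using assms length_pos unfolding nxt_def by (cases p) (auto simp: mod_Suc_eq)
qed

lemma cost_sym: "i < length xs \<Longrightarrow> cost i = w (xs ! nxt i) (xs ! i)"
  using metric nth_in_V[of i] nth_in_V[OF nxt_less] unfolding int_metric_def cost_def by simp

lemma cost_ge_1:
  assumes "i < length xs"
  shows "1 \<le> cost i"
proof -
  have "xs ! i \<noteq> xs ! nxt i" using nth_eq_iff[OF assms nxt_less] nxt_neq[OF assms] by simp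
  then show ?thesis
    using metric nth_in_V[OF assms] nth_in_V[OF nxt_less] unfolding int_metric_def cost_def by simp
qed

text \<open>This fails for \<open>length xs = 2\<close>, where both tour edges join the same two vertices.\<close>
lemma tour_edge_inj:
  assumes "i < length xs" "j < length xs" "{xs ! i, xs ! nxt i} = {xs ! j, xs ! nxt j}"
  shows "i = j"
proof (rule ccontr)
  assume "i \<noteq> j"
  then have "i = nxt j" "nxt i = j"
    using assms nth_eq_iff nxt_less by (auto simp: doubleton_eq_iff)
  then have "j = Suc (Suc j) mod length xs" unfolding nxt_def by (metis mod_Suc_eq)
  then show False using assms(2) length_ge_3 by (auto simp: mod_if split: if_splits)
qed

lemma tour_weight_eq: "tour_weight w xs = (\<Sum>i<length xs. cost i - 1) + card V"
proof -
  have "tour_weight w xs = (\<Sum>i<length xs. (cost i - 1) + 1)"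
    unfolding tour_weight_def
  proof (rule sum.cong[OF refl])
    fix i assume "i \<in> {..<length xs}"
    then have "1 \<le> cost i" by (intro cost_ge_1) simp
    then show "w (xs ! i) (xs ! ((i + 1) mod length xs)) = cost i - 1 + 1"
      by (simp add: cost_def nxt_def)
  qed
  also have "\<dots> = (\<Sum>i<length xs. cost i - 1) + length xs"
    by (subst sum.distrib) simp
  finally show ?thesis using distinct_card[OF distinct] set_xs by simp
qed

lemma walk_to_exit:
  assumes "p < length xs" "xs ! p \<in> B" "q < length xs" "xs ! q \<notin> B"
  obtains i where "i < length xs" "xs ! i \<in> B" "xs ! nxt i \<notin> B"
    "(xs ! p, xs ! i) \<in> {(xs ! j, xs ! nxt j) | j. j < length xs \<and> xs ! j \<in> B \<and> xs ! nxt j \<in> B}\<^sup>*"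
proof -
  let ?N = "length xs"
  let ?I = "{(xs ! j, xs ! nxt j) | j. j < ?N \<and> xs ! j \<in> B \<and> xs ! nxt j \<in> B}"
  define out where "out d \<longleftrightarrow> xs ! ((p + d) mod ?N) \<notin> B" for d
  define D where "D = (LEAST d. out d)"
  have "out (q + ?N - p)" unfolding out_def using assms by simp
  then have out_D: "out D" unfolding D_def by (rule LeastI)
  have in_B: "xs ! ((p + d) mod ?N) \<in> B" if "d < D" for d
    using not_less_Least[of d out] that unfolding D_def out_def by blast
  have "D \<noteq> 0"
  proof
    assume "D = 0"
    then show False using out_D assms(1,2) unfolding out_def by simp
  qed
  have nxt_step: "nxt ((p + d) mod ?N) = (p + Suc d) mod ?N" for d
    unfolding nxt_def by (simp add: mod_Suc_eq)
  have reach: "(xs ! p, xs ! ((p + d) mod ?N)) \<in> ?I\<^sup>*" if "d < D" for d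
    using that
  proof (induction d)
    case 0
    then show ?case using assms(1) by simp
  next
    case (Suc d)
    have "(xs ! ((p + d) mod ?N), xs ! ((p + Suc d) mod ?N)) \<in> ?I"
      using in_B[of d] in_B[of "Suc d"] Suc.prems length_pos nxt_step[of d]
      by (intro CollectI exI[of _ "(p + d) mod ?N"]) auto
    with Suc show ?case by (meson Suc_lessD rtrancl_into_rtrancl)
  qed
  show thesis
  proof (rule that)
    show "(p + (D - 1)) mod ?N < ?N" using length_pos by simp
    show "xs ! ((p + (D - 1)) mod ?N) \<in> B" using in_B[of "D - 1"] \<open>D \<noteq> 0\<close> by simp
    show "xs ! nxt ((p + (D - 1)) mod ?N) \<notin> B"
      using out_D \<open>D \<noteq> 0\<close> nxt_step[of "D - 1"] unfolding out_def by simp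
    show "(xs ! p, xs ! ((p + (D - 1)) mod ?N)) \<in> ?I\<^sup>*" using reach[of "D - 1"] \<open>D \<noteq> 0\<close> by simp
  qed
qed

text \<open>A tour edge touches at most two of a family of disjoint sets.\<close>
lemma sum_excess_near_disjoint:
  assumes "finite K" "\<And>u v. u \<in> K \<Longrightarrow> v \<in> K \<Longrightarrow> u \<noteq> v \<Longrightarrow> F u \<inter> F v = {}"
  shows "(\<Sum>v\<in>K. excess_near (F v)) \<le> 2 * (\<Sum>i<length xs. cost i - 1)"
proof -
  have hit: "(\<Sum>v\<in>K. if y \<in> F v then d else 0) \<le> d" for y and d :: nat
  proof -
    have "card {v \<in> K. y \<in> F v} \<le> 1"
      using assms by (auto simp: card_le_Suc0_iff_eq)
    moreover have "(\<Sum>v\<in>K. if y \<in> F v then d else 0) = card {v \<in> K. y \<in> F v} * d"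
      using sum.inter_filter[OF assms(1), of "\<lambda>_. d" "\<lambda>v. y \<in> F v"] by simp
    ultimately show ?thesis using mult_right_mono[of _ 1 d] by simp
  qed
  have "(\<Sum>v\<in>K. excess_near (F v))
      = (\<Sum>i<length xs. \<Sum>v\<in>K. if xs ! i \<in> F v \<or> xs ! nxt i \<in> F v then cost i - 1 else 0)"
    unfolding excess_near_def by (rule sum.swap)
  also have "\<dots> \<le> (\<Sum>i<length xs. 2 * (cost i - 1))"
  proof (rule sum_mono)
    fix i
    have "(\<Sum>v\<in>K. if xs ! i \<in> F v \<or> xs ! nxt i \<in> F v then cost i - 1 else 0)
        \<le> (\<Sum>v\<in>K. if xs ! i \<in> F v then cost i - 1 else 0) + (\<Sum>v\<in>K. if xs ! nxt i \<in> F v then cost i - 1 else 0)"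
      by (simp add: sum.distrib[symmetric] sum_mono)
    also have "\<dots> \<le> 2 * (cost i - 1)" using hit[of "xs ! i" "cost i - 1"] hit[of "xs ! nxt i" "cost i - 1"] by simp
    finally show "(\<Sum>v\<in>K. if xs ! i \<in> F v \<or> xs ! nxt i \<in> F v then cost i - 1 else 0) \<le> 2 * (cost i - 1)" .
  qed
  finally show ?thesis by (simp add: sum_distrib_left)
qed

end

section \<open>A reconfiguration built from a tour\<close>

lemma mdeg_plus: "mdeg (R + C) u = mdeg R u + mdeg C u"
  unfolding mdeg_def by simp

lemma odd_vertices_plus_twice: "odd_vertices X (R + C + C) = odd_vertices X R"
  unfolding odd_vertices_def mdeg_plus by (simp add: add.assoc flip: mult_2)

lemma card_ones_eq_sum: "finite X \<Longrightarrow> card {i \<in> X. c i = 1} = (\<Sum>i\<in>X. if c i = 1 then 1 else 0)"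
  by (simp add: sum.inter_filter[symmetric])

lemma card_le_excess_plus_ones:
  fixes c :: "'i \<Rightarrow> nat"
  assumes "finite X" "\<And>i. i \<in> X \<Longrightarrow> 1 \<le> c i"
  shows "card X \<le> (\<Sum>i\<in>X. c i - 1) + card {i \<in> X. c i = 1}"
proof -
  have "(\<Sum>i\<in>X. 1) \<le> (\<Sum>i\<in>X. (c i - 1) + (if c i = 1 then 1 else 0))"
    using assms(2) by (intro sum_mono) fastforce
  then show ?thesis unfolding card_ones_eq_sum[OF assms(1)] by (simp add: sum.distrib)
qed

lemma sum_le_twice_excess_plus_ones:
  fixes c :: "'i \<Rightarrow> nat"
  assumes "finite X" "\<And>i. i \<in> X \<Longrightarrow> 1 \<le> c i"
  shows "(\<Sum>i\<in>X. c i) \<le> 2 * (\<Sum>i\<in>X. c i - 1) + card {i \<in> X. c i = 1}"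
proof -
  have "(\<Sum>i\<in>X. c i) \<le> (\<Sum>i\<in>X. 2 * (c i - 1) + (if c i = 1 then 1 else 0))"
    using assms(2) by (intro sum_mono) fastforce
  then show ?thesis unfolding card_ones_eq_sum[OF assms(1)] by (simp add: sum.distrib sum_distrib_left)
qed

text \<open>\<open>A\<close> abstracts \<open>S\<^sub>v\<close> and \<open>E\<close> its bridge \<open>e\<^sub>v\<close>.\<close>
locale tour_cut = metric_tour +
  fixes A :: "'a set" and E :: "'a set"
  assumes A_proper: "A \<subset> V" and A_ne: "A \<noteq> {}"
    and unit_connected:
      "\<And>x y. x \<in> A \<Longrightarrow> y \<in> A \<Longrightarrow> (x, y) \<in> {(a, b). a \<in> A \<and> b \<in> A \<and> w a b = 1}\<^sup>*"
    and unique_unit_exit: "\<And>a b. a \<in> A \<Longrightarrow> b \<in> V - A \<Longrightarrow> w a b = 1 \<Longrightarrow> {a, b} = E"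
begin

definition inner :: "nat set" where
  "inner = {i. i < length xs \<and> xs ! i \<in> A \<and> xs ! nxt i \<in> A}"

definition exits :: "nat set" where
  "exits = {i. i < length xs \<and> xs ! i \<in> A \<and> xs ! nxt i \<notin> A}"

definition crossing :: "nat set" where
  "crossing = {i. i < length xs \<and> (xs ! i \<in> A \<longleftrightarrow> xs ! nxt i \<notin> A)}"

definition inner_edges :: "('a \<times> 'a) multiset" where
  "inner_edges = image_mset (\<lambda>i. (xs ! i, xs ! nxt i)) (mset_set inner)"

definition component :: "'a \<Rightarrow> 'a set" where
  "component a = {b \<in> A. (a, b) \<in> (sym_edges inner_edges)\<^sup>*}"

lemma finite_index_sets [simp]: "finite inner" "finite exits" "finite crossing"
  unfolding inner_def exits_def crossing_def by simp_all

lemma set_inner_edges: "set_mset inner_edges = {(xs ! i, xs ! nxt i) | i. i \<in> inner}"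
  unfolding inner_edges_def by auto

lemma excess_near_eq: "excess_near A = (\<Sum>i\<in>inner. cost i - 1) + (\<Sum>i\<in>crossing. cost i - 1)"
proof -
  have "excess_near A = (\<Sum>i\<in>inner \<union> crossing. cost i - 1)"
    unfolding excess_near_def by (subst sum.inter_filter[symmetric]) (auto intro: sum.cong simp: inner_def crossing_def)
  also have "\<dots> = (\<Sum>i\<in>inner. cost i - 1) + (\<Sum>i\<in>crossing. cost i - 1)"
    by (rule sum.union_disjoint) (auto simp: inner_def crossing_def)
  finally show ?thesis .
qed

text \<open>Every vertex of \<open>A\<close> is the tail of exactly one tour edge, which is inner or an exit.\<close>
lemma card_inner_exits: "card inner + card exits = card A"
proof -
  let ?T = "{i. i < length xs \<and> xs ! i \<in> A}"
  have "card ?T = card inner + card exits"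
    by (subst card_Un_disjoint[symmetric]) (auto simp: inner_def exits_def intro: arg_cong[where f = card])
  moreover have "card ?T = card A"
  proof (rule bij_betw_same_card)
    show "bij_betw ((!) xs) ?T A"
      using A_proper nth_eq_iff
      by (auto simp: bij_betw_def inj_on_def image_def elim!: obtain_index)
  qed
  ultimately show ?thesis by simp
qed

lemma A_subset: "A \<subseteq> V"
  using A_proper by blast

lemma component_sym: "b \<in> component a \<Longrightarrow> a \<in> A \<Longrightarrow> a \<in> component b"
  unfolding component_def by (auto intro: sym_edges_rtrancl_sym)

lemma component_eq: "b \<in> component a \<Longrightarrow> a \<in> A \<Longrightarrow> component b = component a"
  using component_sym unfolding component_def by (blast intro: rtrancl_trans)

lemma components_partition: "partition_on A (component ` A)"
proof (rule partition_onI)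
  show "\<Union> (component ` A) = A" unfolding component_def by blast
  show "disjnt P Q" if "P \<in> component ` A" "Q \<in> component ` A" "P \<noteq> Q" for P Q
    using that component_eq unfolding disjnt_def by blast
  show "{} \<notin> component ` A" unfolding component_def by blast
qed

lemma component_connected:
  "Q \<in> component ` A \<Longrightarrow> x \<in> Q \<Longrightarrow> y \<in> Q \<Longrightarrow> (x, y) \<in> (sym_edges inner_edges)\<^sup>*"
  unfolding component_def by (blast intro: sym_edges_rtrancl_sym rtrancl_trans)

text \<open>Following the tour from \<open>a\<close> along inner edges one reaches an exit, since \<open>A \<noteq> V\<close>.\<close>
lemma component_contains_exit:
  assumes "a \<in> A"
  obtains i where "i \<in> exits" "xs ! i \<in> component a"
proof -
  obtain p where p: "p < length xs" "xs ! p = a" using assms A_subset obtain_index by blast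
  obtain z where "z \<in> V" "z \<notin> A" using A_proper by blast
  then obtain q where q: "q < length xs" "xs ! q \<notin> A" using obtain_index by metis
  have "xs ! p \<in> A" using p assms by simp
  from walk_to_exit[OF p(1) this q]
  obtain i where i: "i < length xs" "xs ! i \<in> A" "xs ! nxt i \<notin> A"
    and walk: "(a, xs ! i) \<in> {(xs ! j, xs ! nxt j) | j. j < length xs \<and> xs ! j \<in> A \<and> xs ! nxt j \<in> A}\<^sup>*"
    unfolding p(2) .
  have "{(xs ! j, xs ! nxt j) | j. j < length xs \<and> xs ! j \<in> A \<and> xs ! nxt j \<in> A} \<subseteq> sym_edges inner_edges"
    unfolding sym_edges_def set_inner_edges inner_def by blast
  from rtrancl_mono[OF this] walk have "(a, xs ! i) \<in> (sym_edges inner_edges)\<^sup>*" by blast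
  then have "xs ! i \<in> component a" using i(2) unfolding component_def by blast
  with i show thesis by (intro that) (simp_all add: exits_def)
qed

lemma card_components_le_exits: "card (component ` A) \<le> card exits"
proof -
  define g where "g Q = (SOME i. i \<in> exits \<and> xs ! i \<in> Q)" for Q
  have g: "g Q \<in> exits \<and> xs ! g Q \<in> Q" if Q: "Q \<in> component ` A" for Q
  proof -
    obtain a where "a \<in> A" "Q = component a" using Q by blast
    then have "\<exists>i. i \<in> exits \<and> xs ! i \<in> Q" using component_contains_exit by metis
    then show ?thesis unfolding g_def by (rule someI_ex)
  qed
  have "inj_on g (component ` A)"
  proof (rule inj_onI)
    fix P Q assume PQ: "P \<in> component ` A" "Q \<in> component ` A" "g P = g Q"
    then have "xs ! g P \<in> P \<inter> Q" using g[OF PQ(1)] g[OF PQ(2)] PQ(3) by simp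
    then show "P = Q"
      using PQ(1,2) components_partition unfolding partition_on_def disjoint_def by blast
  qed
  then show ?thesis using g by (intro card_inj_on_le) auto
qed

lemma mdeg_inner_edges:
  assumes "p < length xs"
  shows "mdeg inner_edges (xs ! p) = card {i \<in> inner. i = p} + card {i \<in> inner. nxt i = p}"
proof -
  have "{i \<in> inner. xs ! i = xs ! p} = {i \<in> inner. i = p}"
    "{i \<in> inner. xs ! nxt i = xs ! p} = {i \<in> inner. nxt i = p}"
    using assms nth_eq_iff nxt_less unfolding inner_def by auto
  then show ?thesis
    unfolding mdeg_def inner_edges_def by (simp add: filter_mset_image_mset)
qed

text \<open>The two tour edges at an odd vertex of \<open>inner_edges\<close> cannot both be inner.\<close>
lemma odd_vertex_on_crossing:
  assumes "u \<in> odd_vertices A inner_edges"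
  obtains i b where "i \<in> crossing" "b \<in> V - A" "cost i = w u b"
    "u = (if xs ! i \<in> A then xs ! i else xs ! nxt i)"
proof -
  have u: "u \<in> A" "odd (mdeg inner_edges u)" using assms unfolding odd_vertices_def by auto
  obtain p where p: "p < length xs" "xs ! p = u" using u(1) A_subset obtain_index by blast
  obtain j where j: "j < length xs" "nxt j = p" using nxt_surj[OF p(1)] by blast
  have "mdeg inner_edges u = 2" if "p \<in> inner" "j \<in> inner"
  proof -
    have "{i \<in> inner. i = p} = {p}" "{i \<in> inner. nxt i = p} = {j}"
      using that nxt_inj j unfolding inner_def by auto
    then show ?thesis using mdeg_inner_edges[OF p(1)] p(2) by simp
  qed
  with u(2) have "p \<notin> inner \<or> j \<notin> inner" by auto
  then consider "p \<notin> inner" | "j \<notin> inner" by blast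
  then show thesis
  proof cases
    case 1
    then have "xs ! nxt p \<notin> A" using p u(1) unfolding inner_def by simp
    then have "p \<in> crossing" "xs ! nxt p \<in> V - A"
      using p u(1) nth_in_V[OF nxt_less] unfolding crossing_def by auto
    moreover have "cost p = w u (xs ! nxt p)" using p(2) unfolding cost_def by simp
    ultimately show thesis using p u(1) by (intro that[of p "xs ! nxt p"]) auto
  next
    case 2
    then have "xs ! j \<notin> A" using j p u(1) unfolding inner_def by auto
    then have "j \<in> crossing" "xs ! j \<in> V - A"
      using j p u(1) nth_in_V[OF j(1)] unfolding crossing_def by auto
    moreover have "cost j = w u (xs ! j)" using cost_sym[OF j(1)] j(2) p(2) by simp
    ultimately show thesis using j p \<open>xs ! j \<notin> A\<close> by (intro that[of j "xs ! j"]) auto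
  qed
qed

lemma sum_odd_le_crossing:
  assumes ord: "\<And>u b. u \<in> A \<Longrightarrow> b \<in> V - A \<Longrightarrow> ord u \<le> w u b"
  shows "(\<Sum>u\<in>odd_vertices A inner_edges. ord u) \<le> (\<Sum>i\<in>crossing. cost i)"
proof -
  let ?O = "odd_vertices A inner_edges"
  define end_in_A where "end_in_A i = (if xs ! i \<in> A then xs ! i else xs ! nxt i)" for i
  define g where "g u = (SOME i. i \<in> crossing \<and> end_in_A i = u \<and> ord u \<le> cost i)" for u
  have ex: "\<exists>i. i \<in> crossing \<and> end_in_A i = u \<and> ord u \<le> cost i" if u: "u \<in> ?O" for u
  proof -
    obtain i b where i: "i \<in> crossing" "b \<in> V - A" "cost i = w u b" "u = end_in_A i"
      using odd_vertex_on_crossing[OF u] unfolding end_in_A_def by blast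
    have "u \<in> A" using u unfolding odd_vertices_def by simp
    then have "ord u \<le> cost i" using ord[of u b] i(2,3) by simp
    then show ?thesis using i(1,4) by blast
  qed
  have g: "g u \<in> crossing \<and> end_in_A (g u) = u \<and> ord u \<le> cost (g u)" if "u \<in> ?O" for u
    unfolding g_def by (rule someI_ex) (rule ex[OF that])
  have inj: "inj_on g ?O"
  proof (rule inj_onI)
    fix u v assume "u \<in> ?O" "v \<in> ?O" "g u = g v"
    then show "u = v" using g by metis
  qed
  have "(\<Sum>u\<in>?O. ord u) \<le> (\<Sum>u\<in>?O. cost (g u))" using g by (intro sum_mono) blast
  also have "\<dots> = (\<Sum>i\<in>g ` ?O. cost i)" by (simp add: sum.reindex[OF inj])
  also have "\<dots> \<le> (\<Sum>i\<in>crossing. cost i)" using g by (intro sum_mono2) auto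
  finally show ?thesis .
qed

text \<open>Only the bridge \<open>E\<close> can be a crossing tour edge of cost one.\<close>
lemma card_light_crossing: "card {i \<in> crossing. cost i = 1} \<le> 1"
proof -
  have "{xs ! i, xs ! nxt i} = E" if "i \<in> crossing" "cost i = 1" for i
  proof -
    have i: "i < length xs" using that unfolding crossing_def by simp
    show ?thesis
    proof (cases "xs ! i \<in> A")
      case True
      then show ?thesis
        using that unique_unit_exit nth_in_V[OF nxt_less] unfolding crossing_def cost_def by auto
    next
      case False
      then have "{xs ! nxt i, xs ! i} = E"
        using that i unique_unit_exit nth_in_V[OF i] cost_sym unfolding crossing_def by auto
      then show ?thesis by (simp add: insert_commute)
    qed
  qed
  then have "i = j" if "i \<in> {i \<in> crossing. cost i = 1}" "j \<in> {i \<in> crossing. cost i = 1}" for i j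
    using that tour_edge_inj unfolding crossing_def by force
  then show ?thesis by (simp add: card_le_Suc0_iff_eq)
qed

text \<open>The tour leaves and re-enters \<open>A\<close> along two different crossing edges.\<close>
lemma crossing_excess_pos: "1 \<le> (\<Sum>i\<in>crossing. cost i - 1)"
proof -
  obtain a z where az: "a \<in> A" "z \<in> V - A" using A_proper A_ne by blast
  obtain p where "p < length xs" "xs ! p = a" using az(1) A_subset obtain_index by blast
  with az have p: "p < length xs" "xs ! p \<in> A" by simp_all
  obtain q where "q < length xs" "xs ! q = z" using az(2) obtain_index by blast
  with az have q: "q < length xs" "xs ! q \<in> V - A" by simp_all
  have "xs ! q \<notin> A" "xs ! p \<notin> V - A" using p(2) q(2) by auto
  obtain i where i: "i < length xs" "xs ! i \<in> A" "xs ! nxt i \<notin> A"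
    using walk_to_exit[OF p(1,2) q(1) \<open>xs ! q \<notin> A\<close>] by blast
  obtain j where j: "j < length xs" "xs ! j \<in> V - A" "xs ! nxt j \<notin> V - A"
    using walk_to_exit[OF q(1,2) p(1) \<open>xs ! p \<notin> V - A\<close>] by blast
  have "xs ! nxt j \<in> A" using j(3) nth_in_V[OF nxt_less] by blast
  then have ij: "i \<in> crossing" "j \<in> crossing" "i \<noteq> j"
    using i j unfolding crossing_def by auto
  have "\<not> (cost i = 1 \<and> cost j = 1)"
  proof
    assume "cost i = 1 \<and> cost j = 1"
    then have "{i, j} \<subseteq> {i \<in> crossing. cost i = 1}" using ij by blast
    then have "card {i, j} \<le> 1"
      using card_light_crossing card_mono[of "{i \<in> crossing. cost i = 1}" "{i, j}"] by simp
    then show False using ij(3) by simp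
  qed
  then obtain k where k: "k \<in> crossing" "cost k \<noteq> 1" using ij by blast
  then have "2 \<le> cost k" using cost_ge_1[of k] unfolding crossing_def by simp
  then show ?thesis using member_le_sum[of k crossing "\<lambda>i. cost i - 1"] k by simp
qed

lemma inner_edges_weight: "(\<Sum>p\<in>#inner_edges. w (fst p) (snd p)) = (\<Sum>i\<in>inner. cost i)"
  unfolding inner_edges_def cost_def sum_unfold_sum_mset[of _ inner]
  by (simp add: multiset.map_comp o_def)

lemma sum_inner_cost: "(\<Sum>i\<in>inner. cost i) = (\<Sum>i\<in>inner. cost i - 1) + card inner"
proof -
  have "(\<Sum>i\<in>inner. cost i) = (\<Sum>i\<in>inner. (cost i - 1) + 1)"
  proof (rule sum.cong[OF refl])
    fix i assume "i \<in> inner"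
    then have "1 \<le> cost i" by (intro cost_ge_1) (simp add: inner_def)
    then show "cost i = cost i - 1 + 1" by simp
  qed
  then show ?thesis by (subst (asm) sum.distrib) simp
qed

text \<open>\<open>C\<close> is a spanning forest of unit edges on the components of the inner tour edges,
  doubled so that no degree changes parity.\<close>
lemma exists_doubled_connector:
  obtains C where "size C + 1 \<le> card exits" "\<forall>p\<in>#C. w (fst p) (snd p) = 1"
    "is_reconf A (inner_edges + C + C)"
proof -
  let ?G = "{(a, b). a \<in> A \<and> b \<in> A \<and> w a b = 1}"
  have fin: "finite (component ` A)" using A_subset finite_subset[OF _ finite_set] set_xs by auto
  then have "\<exists>C. size C \<le> card (component ` A) - 1 \<and> set_mset C \<subseteq> ?G \<and>
      (\<forall>x\<in>A. \<forall>y\<in>A. (x, y) \<in> (sym_edges (inner_edges + C))\<^sup>*)"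
    by (rule connecting_edges_for_partition[OF _ components_partition])
      (blast intro: component_connected unit_connected)+
  then obtain C where C: "size C \<le> card (component ` A) - 1" "set_mset C \<subseteq> ?G"
      "\<forall>x\<in>A. \<forall>y\<in>A. (x, y) \<in> (sym_edges (inner_edges + C))\<^sup>*"
    by blast
  have "0 < card (component ` A)" using fin A_ne by (simp add: card_gt_0_iff)
  then have "size C + 1 \<le> card exits" using C(1) card_components_le_exits by linarith
  moreover have "\<forall>p\<in>#C. w (fst p) (snd p) = 1" using C(2) by auto
  moreover have "is_reconf A (inner_edges + C + C)"
  proof -
    let ?R = "inner_edges + C + C"
    have "sym_edges (inner_edges + C) = set_mset ?R \<union> (set_mset ?R)\<inverse>"
      unfolding sym_edges_def by auto
    moreover have "fst p \<in> A \<and> snd p \<in> A" if "p \<in># ?R" for p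
      using that C(2) unfolding inner_edges_def inner_def by auto
    ultimately show ?thesis using C(3) unfolding is_reconf_def by simp
  qed
  ultimately show thesis by (rule that)
qed

lemma card_exits_le: "card exits \<le> (\<Sum>i\<in>crossing. cost i - 1) + card {i \<in> crossing. cost i = 1}"
proof -
  have "exits \<subseteq> crossing" unfolding exits_def crossing_def by auto
  then have "(\<Sum>i\<in>exits. cost i - 1) \<le> (\<Sum>i\<in>crossing. cost i - 1)"
    "card {i \<in> exits. cost i = 1} \<le> card {i \<in> crossing. cost i = 1}"
    by (simp_all add: sum_mono2 card_mono Collect_mono_iff subset_iff)
  moreover have "card exits \<le> (\<Sum>i\<in>exits. cost i - 1) + card {i \<in> exits. cost i = 1}"
    using cost_ge_1 by (intro card_le_excess_plus_ones) (auto simp: exits_def)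
  ultimately show ?thesis by linarith
qed

text \<open>The cost count: \<open>|A| = |inner| + |exits|\<close>, the connector costs less than \<open>2 |exits|\<close>, the
  odd vertices cost at most the crossing edges, and at most one crossing edge has cost one while
  some has cost at least two.\<close>
theorem exists_cheap_reconf:
  assumes ord: "\<And>u b. u \<in> A \<Longrightarrow> b \<in> V - A \<Longrightarrow> ord u \<le> w u b"
  shows "\<exists>R. is_reconf A R \<and>
    real (\<Sum>p\<in>#R. w (fst p) (snd p)) + 1/2 * real (\<Sum>u\<in>odd_vertices A R. ord u)
      - (real (card A) - 1) \<le> 3 * real (excess_near A)"
proof -
  obtain C where C: "size C + 1 \<le> card exits" "\<forall>p\<in>#C. w (fst p) (snd p) = 1"
    and reconf: "is_reconf A (inner_edges + C + C)"
    by (rule exists_doubled_connector)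
  define R where "R = inner_edges + C + C"
  have "(\<Sum>p\<in>#C. w (fst p) (snd p)) = size C"
    using C(2) by (induction C) auto
  then have weight: "(\<Sum>p\<in>#R. w (fst p) (snd p)) = (\<Sum>i\<in>inner. cost i - 1) + card inner + 2 * size C"
    unfolding R_def using inner_edges_weight sum_inner_cost by simp
  have odd: "(\<Sum>u\<in>odd_vertices A R. ord u) \<le> (\<Sum>i\<in>crossing. cost i)"
    unfolding R_def odd_vertices_plus_twice using ord by (rule sum_odd_le_crossing)
  have "(\<Sum>i\<in>crossing. cost i) \<le> 2 * (\<Sum>i\<in>crossing. cost i - 1) + card {i \<in> crossing. cost i = 1}"
    using cost_ge_1 by (intro sum_le_twice_excess_plus_ones) (auto simp: crossing_def)
  then have "2 * (\<Sum>p\<in>#R. w (fst p) (snd p)) + (\<Sum>u\<in>odd_vertices A R. ord u) + 2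
      \<le> 2 * card A + 6 * excess_near A"
    using weight odd C(1) card_exits_le card_inner_exits card_light_crossing crossing_excess_pos
      excess_near_eq
    by linarith
  then have "2 * real (\<Sum>p\<in>#R. w (fst p) (snd p)) + real (\<Sum>u\<in>odd_vertices A R. ord u) + 2
      \<le> 2 * real (card A) + 6 * real (excess_near A)"
    unfolding of_nat_le_iff[symmetric, where 'a = real] by simp
  then show ?thesis using reconf[folded R_def] by (intro exI[of _ R]) simp
qed

end

section \<open>Light vertices\<close>

lemma sym_adj: "sym (adj F)"
  by (auto simp: adj_def sym_def insert_commute)

lemma gcomp_self: "x \<in> gcomp F x"
  unfolding gcomp_def by simp

lemma gcomp_sym:
  assumes "y \<in> gcomp F x"
  shows "x \<in> gcomp F y"
proof -
  have "(x, y) \<in> (adj F)\<^sup>*" using assms unfolding gcomp_def by simp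
  then have "(y, x) \<in> (adj F)\<^sup>*" by (rule symD[OF sym_rtrancl[OF sym_adj]])
  then show ?thesis unfolding gcomp_def by simp
qed

lemma gcomp_step: "y \<in> gcomp F x \<Longrightarrow> {y, z} \<in> F \<Longrightarrow> y \<noteq> z \<Longrightarrow> z \<in> gcomp F x"
  unfolding gcomp_def adj_def by (blast intro: rtrancl_into_rtrancl)

lemma G1_pair:
  assumes "{a, b} \<in> G1 V w" "int_metric V w"
  shows "a \<in> V \<and> b \<in> V \<and> w a b = 1"
proof -
  obtain u v where uv: "{a, b} = {u, v}" "u \<in> V" "v \<in> V" "w u v = 1"
    using assms(1) unfolding G1_def by blast
  have "w v u = 1" using assms(2) uv(2-4) unfolding int_metric_def by metis
  from uv(1) consider "a = u" "b = v" | "a = v" "b = u" by (metis doubleton_eq_iff)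
  then show ?thesis by cases (use uv \<open>w v u = 1\<close> in simp_all)
qed

lemma gcomp_subset:
  assumes "F \<subseteq> G1 V w" "int_metric V w" "x \<in> V"
  shows "gcomp F x \<subseteq> V"
proof
  fix y assume "y \<in> gcomp F x"
  then have "(x, y) \<in> (adj F)\<^sup>*" unfolding gcomp_def by simp
  then show "y \<in> V"
  proof induction
    case (step y z)
    then have "{y, z} \<in> G1 V w" using assms(1) unfolding adj_def by auto
    then show ?case using G1_pair[OF _ assms(2)] by blast
  qed (use assms(3) in simp)
qed

lemma bridge_other_end:
  assumes "is_bridge F e" "v \<in> e"
  obtains x where "e = {v, x}" "x \<noteq> v" "x \<notin> gcomp (F - {e}) v"
proof -
  obtain a b where ab: "e = {a, b}" "a \<noteq> b" "b \<notin> gcomp (F - {e}) a"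
    using assms(1) unfolding is_bridge_def by blast
  show thesis
  proof (cases "v = a")
    case True
    with ab show thesis by (intro that[of b]) auto
  next
    case False
    then have "v = b" using assms(2) ab(1) by simp
    moreover have "a \<notin> gcomp (F - {e}) b" using ab(3) gcomp_sym by metis
    ultimately show thesis using ab(1,2) by (intro that[of a]) (auto simp: insert_commute)
  qed
qed

lemma light_witness_props:
  assumes "light_witness V w l v e" "int_metric V w"
  shows "e \<in> G1 V w" "v \<in> V" "gcomp (G1 V w - {e}) v \<subseteq> V" "card (gcomp (G1 V w - {e}) v) \<le> l"
proof -
  show e: "e \<in> G1 V w" using assms(1) unfolding light_witness_def is_bridge_def by simp
  obtain a b where "e = {a, b}" "a \<in> V" "b \<in> V" using e unfolding G1_def by blast
  moreover have "v \<in> e" using assms(1) unfolding light_witness_def by simp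
  ultimately show "v \<in> V" by auto
  then show "gcomp (G1 V w - {e}) v \<subseteq> V" using gcomp_subset[OF _ assms(2)] by blast
  show "card (gcomp (G1 V w - {e}) v) \<le> l" using assms(1) unfolding light_witness_def by simp
qed

text \<open>The only edge leaving \<open>v\<close>'s side of one bridge is that bridge itself, which stays on
  \<open>v\<close>'s side of any other bridge through \<open>v\<close>.\<close>
lemma gcomp_step_other_bridge:
  assumes e: "light_witness V w l v e" "e \<noteq> e'" "v \<in> e'"
    and y: "y \<in> gcomp (G1 V w - {e}) v" and yz: "{y, z} \<in> G1 V w" "y \<noteq> z"
  shows "z \<in> gcomp (G1 V w - {e}) v \<union> gcomp (G1 V w - {e'}) v"
proof (cases "{y, z} = e")
  case False
  then have "{y, z} \<in> G1 V w - {e}" using yz(1) by blast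
  then show ?thesis using gcomp_step[of y "G1 V w - {e}" v z] y yz(2) by blast
next
  case True
  have "is_bridge (G1 V w) e" "v \<in> e" using e(1) unfolding light_witness_def by auto
  then obtain x where x: "e = {v, x}" "x \<notin> gcomp (G1 V w - {e}) v"
    by (rule bridge_other_end)
  have "y \<noteq> x" using x(2) y by blast
  then have "y = v" "z = x" using True x(1) by (auto simp: doubleton_eq_iff)
  then have "{v, z} \<in> G1 V w - {e'}" using True e(2) yz(1) by auto
  then have "z \<in> gcomp (G1 V w - {e'}) v"
    using gcomp_step[OF gcomp_self[of v "G1 V w - {e'}"], of z] yz(2) \<open>y = v\<close> by blast
  then show ?thesis by blast
qed

text \<open>If \<open>v\<close> lay on two bridges, every vertex would be on \<open>v\<close>'s side of one of them, so the
  two sides would cover \<open>V\<close>; this is impossible when both have at most \<open>l < n/2\<close> vertices.\<close>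
lemma light_witness_unique:
  assumes "finite V" "int_metric V w" "connected_graph V (G1 V w)" "2 * l < card V"
    and e1: "light_witness V w l v e1" and e2: "light_witness V w l v e2"
  shows "e1 = e2"
proof (rule ccontr)
  assume ne: "e1 \<noteq> e2"
  define C where "C e = gcomp (G1 V w - {e}) v" for e
  have "v \<in> e1" "v \<in> e2" using e1 e2 unfolding light_witness_def by simp_all
  have vV: "v \<in> V" using light_witness_props(2)[OF e1 assms(2)] .
  have cover: "V \<subseteq> C e1 \<union> C e2"
  proof
    fix z assume "z \<in> V"
    then have "(v, z) \<in> (adj (G1 V w))\<^sup>*" using assms(3) vV unfolding connected_graph_def by blast
    then show "z \<in> C e1 \<union> C e2"
    proof induction
      case base
      show ?case unfolding C_def using gcomp_self[of v] by blast
    next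
      case (step y z)
      have yz: "{y, z} \<in> G1 V w" "y \<noteq> z" using step.hyps(2) unfolding adj_def by auto
      from step.IH show ?case
      proof
        assume "y \<in> C e1"
        then show ?case using gcomp_step_other_bridge[OF e1 ne \<open>v \<in> e2\<close> _ yz] unfolding C_def by blast
      next
        assume "y \<in> C e2"
        then show ?case
          using gcomp_step_other_bridge[OF e2 ne[symmetric] \<open>v \<in> e1\<close> _ yz] unfolding C_def by blast
      qed
    qed
  qed
  have C: "C e1 \<subseteq> V" "card (C e1) \<le> l" "C e2 \<subseteq> V" "card (C e2) \<le> l"
    using light_witness_props(3,4)[OF e1 assms(2)] light_witness_props(3,4)[OF e2 assms(2)]
    unfolding C_def by auto
  then have "finite (C e1)" "finite (C e2)" using assms(1) finite_subset by auto
  then have "card V \<le> card (C e1 \<union> C e2)" using cover by (intro card_mono) auto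
  also have "\<dots> \<le> card (C e1) + card (C e2)" by (rule card_Un_le)
  finally show False using C(2,4) assms(4) by linarith
qed

locale tsp_instance =
  fixes V :: "'a set" and w :: "'a \<Rightarrow> 'a \<Rightarrow> nat" and l :: nat
  assumes finite_V: "finite V" and metric: "int_metric V w"
    and connected: "connected_graph V (G1 V w)" and l_small: "2 * l < card V"
begin

lemma S_eq: "light_witness V w l v e \<Longrightarrow> S V w l v = gcomp (G1 V w - {e}) v"
  unfolding S_def using light_witness_unique[OF finite_V metric connected l_small]
  by (metis theI)

lemma L_witness:
  assumes "v \<in> L V w l"
  obtains e where "light_witness V w l v e" "S V w l v = gcomp (G1 V w - {e}) v"
  using assms S_eq unfolding L_def max_light_def light_def by blast

lemma S_subset: "v \<in> L V w l \<Longrightarrow> S V w l v \<subseteq> V"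
  using light_witness_props(3)[OF _ metric] by (metis L_witness)

lemma S_self: "v \<in> L V w l \<Longrightarrow> v \<in> S V w l v"
  using gcomp_self by (metis L_witness)

lemma card_S: "v \<in> L V w l \<Longrightarrow> card (S V w l v) \<le> l"
  using light_witness_props(4)[OF _ metric] by (metis L_witness)

lemma S_proper: "v \<in> L V w l \<Longrightarrow> S V w l v \<subset> V"
  using S_subset card_S l_small by fastforce

lemma S_leaving_edge:
  assumes "light_witness V w l v e" "a \<in> S V w l v" "b \<notin> S V w l v" "{a, b} \<in> G1 V w"
  shows "{a, b} = e" "a = v"
proof -
  have S: "S V w l v = gcomp (G1 V w - {e}) v" using S_eq[OF assms(1)] .
  show ab: "{a, b} = e"
  proof (rule ccontr)
    assume "{a, b} \<noteq> e"
    then have "b \<in> gcomp (G1 V w - {e}) v"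
      using gcomp_step[of a "G1 V w - {e}" v b] assms(2-4) S by blast
    then show False using assms(3) S by simp
  qed
  have "is_bridge (G1 V w) e" "v \<in> e" using assms(1) unfolding light_witness_def by auto
  then obtain x where x: "e = {v, x}" "x \<notin> S V w l v"
    unfolding S by (rule bridge_other_end)
  then show "a = v" using ab assms(2) by (auto simp: doubleton_eq_iff)
qed

lemma S_unit_connected:
  assumes "v \<in> L V w l" "x \<in> S V w l v" "y \<in> S V w l v"
  shows "(x, y) \<in> {(a, b). a \<in> S V w l v \<and> b \<in> S V w l v \<and> w a b = 1}\<^sup>*"
proof -
  obtain e where S: "S V w l v = gcomp (G1 V w - {e}) v" using assms(1) L_witness by metis
  let ?G = "{(a, b). a \<in> S V w l v \<and> b \<in> S V w l v \<and> w a b = 1}"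
  have "w a b = w b a" if "a \<in> S V w l v" "b \<in> S V w l v" for a b
    using that S_subset[OF assms(1)] metric unfolding int_metric_def by blast
  then have "sym ?G" unfolding sym_def by auto
  have from_v: "(v, z) \<in> ?G\<^sup>*" if "z \<in> S V w l v" for z
  proof -
    have "(v, z) \<in> (adj (G1 V w - {e}))\<^sup>*" using that S unfolding gcomp_def by simp
    then show ?thesis
    proof induction
      case (step y z)
      then have "y \<in> S V w l v" "z \<in> S V w l v"
        using S unfolding gcomp_def by (auto intro: rtrancl_into_rtrancl)
      moreover have "w y z = 1" using step(2) G1_pair[OF _ metric] unfolding adj_def by blast
      ultimately show ?case using step.IH by (auto intro: rtrancl_into_rtrancl)
    qed simp
  qed
  show ?thesis
    using from_v[OF assms(2)] from_v[OF assms(3)] symD[OF sym_rtrancl[OF \<open>sym ?G\<close>]]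
    by (blast intro: rtrancl_trans)
qed

lemma ordist_le: "b \<in> V - S V w l v \<Longrightarrow> ordist V w l v u \<le> w u b"
  unfolding ordist_def using finite_V by (intro Min_le) auto

text \<open>Maximality: \<open>u \<notin> S\<^sub>v\<close> and \<open>v \<notin> S\<^sub>u\<close>. A path inside \<open>S\<^sub>v\<close> from a common vertex to \<open>v\<close>
  would have to leave \<open>S\<^sub>u\<close> through its bridge, hence through \<open>u\<close>, putting \<open>u\<close> in \<open>S\<^sub>v\<close>.\<close>
lemma S_disjoint:
  assumes u: "u \<in> L V w l" and v: "v \<in> L V w l" and "u \<noteq> v"
  shows "S V w l u \<inter> S V w l v = {}"
proof (rule ccontr)
  assume "S V w l u \<inter> S V w l v \<noteq> {}"
  then obtain y where y: "y \<in> S V w l u" "y \<in> S V w l v" by blast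
  obtain eu where eu: "light_witness V w l u eu" using u L_witness by metis
  obtain ev where ev: "light_witness V w l v ev" using v L_witness by metis
  have not_inside: "x \<notin> S V w l x'" if x: "x \<in> L V w l" "x' \<in> L V w l" "x \<noteq> x'" for x x'
  proof
    assume "x \<in> S V w l x'"
    moreover have "light V w l x'" using x(2) unfolding L_def max_light_def by simp
    moreover have "max_light V w l x" using x(1) unfolding L_def by simp
    ultimately show False using x(3) unfolding max_light_def by auto
  qed
  have "v \<notin> S V w l u" "u \<notin> S V w l v"
    using not_inside u v \<open>u \<noteq> v\<close> by auto
  let ?H = "adj (G1 V w - {ev})"
  have "(v, y) \<in> ?H\<^sup>*" using y(2) S_eq[OF ev] unfolding gcomp_def by simp
  then have "(y, v) \<in> ?H\<^sup>*" by (rule symD[OF sym_rtrancl[OF sym_adj]])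
  from rtrancl_exit_edge[OF this y(1) \<open>v \<notin> S V w l u\<close>]
  obtain a b where ab: "(y, a) \<in> ?H\<^sup>*" "(a, b) \<in> ?H" "a \<in> S V w l u" "b \<notin> S V w l u" .
  have "(v, a) \<in> ?H\<^sup>*" using \<open>(v, y) \<in> ?H\<^sup>*\<close> ab(1) by (rule rtrancl_trans)
  then have "a \<in> S V w l v" using S_eq[OF ev] unfolding gcomp_def by simp
  moreover have "a = u" using S_leaving_edge(2)[OF eu ab(3,4)] ab(2) unfolding adj_def by simp
  ultimately show False using \<open>u \<notin> S V w l v\<close> by simp
qed

lemma finite_L: "finite (L V w l)"
proof -
  have "L V w l \<subseteq> V" unfolding L_def max_light_def light_def by blast
  then show ?thesis using finite_V finite_subset by blast
qed

end

locale tsp_tour = tsp_instance V w l + metric_tour V w xs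
  for V :: "'a set" and w :: "'a \<Rightarrow> 'a \<Rightarrow> nat" and l :: nat and xs :: "'a list"
begin

lemma rc_le_excess_near:
  assumes v: "v \<in> L V w l"
  shows "rc V w l v \<le> 3 * real (excess_near (S V w l v))"
proof -
  obtain e where e: "light_witness V w l v e" using v L_witness by metis
  have "{a, b} = e" if "a \<in> S V w l v" "b \<in> V - S V w l v" "w a b = 1" for a b
  proof -
    have "a \<in> V" "a \<noteq> b" using that S_subset[OF v] by auto
    then have "{a, b} \<in> G1 V w" using that unfolding G1_def by blast
    then show ?thesis using S_leaving_edge(1)[OF e] that by blast
  qed
  then interpret tour_cut V w xs "S V w l v" e
    using S_proper[OF v] S_self[OF v] S_unit_connected[OF v] by unfold_locales auto
  have "\<exists>R. is_reconf (S V w l v) R \<and> rcost V w l v R \<le> 3 * real (excess_near (S V w l v))"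
    unfolding rcost_def by (rule exists_cheap_reconf) (rule ordist_le)
  then obtain R where R: "is_reconf (S V w l v) R" "rcost V w l v R \<le> 3 * real (excess_near (S V w l v))"
    by blast
  have "- real (card (S V w l v)) \<le> rcost V w l v R'" for R'
  proof -
    have "0 \<le> real (\<Sum>p\<in>#R'. w (fst p) (snd p))"
      "0 \<le> real (\<Sum>u\<in>odd_vertices (S V w l v) R'. ordist V w l v u)"
      by (rule of_nat_0_le_iff)+
    then show ?thesis unfolding rcost_def by linarith
  qed
  then have "bdd_below {rcost V w l v R | R. is_reconf (S V w l v) R}"
    by (intro bdd_belowI) auto
  then have "rc V w l v \<le> rcost V w l v R"
    unfolding rc_def using R(1) by (intro cInf_lower) auto
  then show ?thesis using R(2) by linarith
qed

lemma sum_rc_le: "(\<Sum>v\<in>L V w l. rc V w l v) \<le> 6 * real (\<Sum>i<length xs. cost i - 1)"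
proof -
  have "(\<Sum>v\<in>L V w l. rc V w l v) \<le> (\<Sum>v\<in>L V w l. 3 * real (excess_near (S V w l v)))"
    using rc_le_excess_near by (rule sum_mono)
  also have "\<dots> = 3 * real (\<Sum>v\<in>L V w l. excess_near (S V w l v))"
    by (simp add: sum_distrib_left)
  also have "\<dots> \<le> 3 * real (2 * (\<Sum>i<length xs. cost i - 1))"
  proof -
    have "(\<Sum>v\<in>L V w l. excess_near (S V w l v)) \<le> 2 * (\<Sum>i<length xs. cost i - 1)"
      by (rule sum_excess_near_disjoint[OF finite_L]) (rule S_disjoint)
    then show ?thesis by linarith
  qed
  finally show ?thesis by simp
qed

end

section \<open>The lower bound\<close>

lemma TSP_attained:
  assumes "finite V"
  obtains xs where "distinct xs" "set xs = V" "TSP V w = tour_weight w xs"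
proof -
  let ?T = "{tour_weight w xs | xs. distinct xs \<and> set xs = V}"
  have "?T \<subseteq> tour_weight w ` {xs. set xs \<subseteq> V \<and> length xs \<le> card V}"
    using distinct_card by fastforce
  then have "finite ?T" using finite_lists_length_le[OF assms] finite_subset by blast
  moreover have "?T \<noteq> {}" using finite_distinct_list[OF assms] by auto
  ultimately have "Min ?T \<in> ?T" by (rule Min_in)
  then show thesis using that unfolding TSP_def by auto
qed

theorem mainTheorem7:
  fixes V :: "'a set" and w :: "'a \<Rightarrow> 'a \<Rightarrow> nat" and n l :: nat
  assumes "finite V" and "card V = n"
    and "int_metric V w"
    and "connected_graph V (G1 V w)"
    and "0 < l" and "2 * l < n"
  shows "real (TSP V w) \<ge> real n + (1/7) * (\<Sum>v\<in>L V w l. rc V w l v)"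
proof -
  obtain xs where xs: "distinct xs" "set xs = V" "TSP V w = tour_weight w xs"
    using TSP_attained[OF assms(1)] .
  have "3 \<le> length xs" using distinct_card[OF xs(1)] xs(2) assms(2,5,6) by simp
  then interpret tsp_tour V w l xs using assms xs by unfold_locales simp_all
  define D where "D = real (\<Sum>i<length xs. cost i - 1)"
  have "real (TSP V w) = real n + D" using tour_weight_eq xs(3) assms(2) unfolding D_def by simp
  moreover have "(\<Sum>v\<in>L V w l. rc V w l v) \<le> 6 * D" using sum_rc_le unfolding D_def .
  moreover have "0 \<le> D" unfolding D_def by (rule of_nat_0_le_iff)
  ultimately show ?thesis by linarith
qed

end
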